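(* Let $D$ be a rad-colon coherent domain. If $\{P_\alpha\}_{\alpha\in A}$ is a chain of prime ideals of $D$ and $P:=\bigcup_\alpha P_\alpha$, then $\bigcap_\alpha D_{P_\alpha}=D_P$.
   Context: An integral domain $D$ with quotient field $K$ is called rad-colon coherent if, for every $x\in K$, the radical of the conductor $(D:_Dx)$ is the radical of a finitely generated ideal. *)

theory Defs
  imports Main
begin

text \<open>An integral domain D is represented as a subring of a field of type 'k
  whose quotient field is the whole type 'k (every element is a/b with a,b in D, b nonzero).\<close>

definition subring_of :: "'k::field set \<Rightarrow> bool" where
  "subring_of D \<longleftrightarrow> 0 \<in> D \<and> 1 \<in> D \<and>
     (\<forall>a\<in>D. \<forall>b\<in>D. a + b \<in> D \<and> a * b \<in> D) \<and> (\<forall>a\<in>D. - a \<in> D)"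

definition has_quotient_field_UNIV :: "'k::field set \<Rightarrow> bool" where
  "has_quotient_field_UNIV D \<longleftrightarrow> (\<forall>x. \<exists>a\<in>D. \<exists>b\<in>D. b \<noteq> 0 \<and> x = a / b)"

definition ideal_of :: "'k::field set \<Rightarrow> 'k set \<Rightarrow> bool" where
  "ideal_of D I \<longleftrightarrow> I \<subseteq> D \<and> 0 \<in> I \<and> (\<forall>a\<in>I. \<forall>b\<in>I. a + b \<in> I) \<and>
     (\<forall>r\<in>D. \<forall>a\<in>I. r * a \<in> I)"

definition prime_ideal_of :: "'k::field set \<Rightarrow> 'k set \<Rightarrow> bool" where
  "prime_ideal_of D P \<longleftrightarrow> ideal_of D P \<and> P \<noteq> D \<and>
     (\<forall>a\<in>D. \<forall>b\<in>D. a * b \<in> P \<longrightarrow> a \<in> P \<or> b \<in> P)"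

definition ideal_gen :: "'k::field set \<Rightarrow> 'k set \<Rightarrow> 'k set" where
  "ideal_gen D F = {\<Sum>f\<in>F. r f * f | r. \<forall>f\<in>F. r f \<in> D}"

definition radical_of :: "'k::field set \<Rightarrow> 'k set \<Rightarrow> 'k set" where
  "radical_of D I = {d \<in> D. \<exists>n::nat. d ^ n \<in> I}"

definition conductor :: "'k::field set \<Rightarrow> 'k \<Rightarrow> 'k set" where
  "conductor D x = {d \<in> D. d * x \<in> D}"

definition rad_colon_coherent :: "'k::field set \<Rightarrow> bool" where
  "rad_colon_coherent D \<longleftrightarrow> (\<forall>x::'k. \<exists>F. finite F \<and> F \<subseteq> D \<and>
     radical_of D (conductor D x) = radical_of D (ideal_gen D F))"

definition localization :: "'k::field set \<Rightarrow> 'k set \<Rightarrow> 'k set" where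
  "localization D P = {a / s | a s. a \<in> D \<and> s \<in> D \<and> s \<notin> P}"

end

theory Submission
  imports Defs
begin

text \<open>An element x lies in D_Q exactly when the conductor (D :_D x) is not contained in Q, so
  the claim is that a conductor contained in the union Q of the chain already lies in a member of
  the chain. A prime contains an ideal iff it contains its radical, so by rad-colon coherence a prime
  contains the conductor iff it contains a certain finite set F. The union Q is again prime, so it
  contains F; being finite, F lies in a single member of the chain, which then contains the
  conductor.\<close>

lemma subring_of_power_mem:
  assumes "subring_of D" "d \<in> D"
  shows "d ^ n \<in> D"
  using assms by (induction n) (auto simp: subring_of_def)

lemma subring_of_imp_ideal_of_self: "subring_of D \<Longrightarrow> ideal_of D D"
  by (auto simp: subring_of_def ideal_of_def)

lemma ideal_of_sum_mem:
  assumes "ideal_of D I" "finite F" "\<And>f. f \<in> F \<Longrightarrow> g f \<in> I"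
  shows "sum g F \<in> I"
  using assms(2,3)
proof (induction F rule: finite_induct)
  case empty
  then show ?case using assms(1) by (simp add: ideal_of_def)
next
  case (insert x F)
  then show ?case using assms(1) by (simp add: ideal_of_def)
qed

lemma prime_ideal_of_one_notin:
  assumes "prime_ideal_of D Q"
  shows "1 \<notin> Q"
proof
  assume "1 \<in> Q"
  have "r \<in> Q" if "r \<in> D" for r
  proof -
    have "r * 1 \<in> Q"
      using assms that \<open>1 \<in> Q\<close> unfolding prime_ideal_of_def ideal_of_def by blast
    then show ?thesis by simp
  qed
  moreover have "Q \<subseteq> D" "Q \<noteq> D"
    using assms by (simp_all add: prime_ideal_of_def ideal_of_def)
  ultimately show False by blast
qed

lemma prime_ideal_of_power_mem_imp_mem:
  assumes "subring_of D" "prime_ideal_of D Q" "d \<in> D" "d ^ n \<in> Q"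
  shows "d \<in> Q"
  using assms(4)
proof (induction n)
  case 0
  then show ?case using prime_ideal_of_one_notin[OF assms(2)] by simp
next
  case (Suc n)
  have "d * d ^ n \<in> Q" using Suc.prems by simp
  moreover have "d ^ n \<in> D" using subring_of_power_mem assms(1,3) by blast
  ultimately show ?case using assms(2,3) Suc.IH unfolding prime_ideal_of_def by blast
qed

lemma radical_of_subset_prime_iff:
  assumes "subring_of D" "prime_ideal_of D Q" "I \<subseteq> D"
  shows "radical_of D I \<subseteq> Q \<longleftrightarrow> I \<subseteq> Q"
proof
  have "I \<subseteq> radical_of D I"
    using assms(3) unfolding radical_of_def by (force intro: exI[of _ 1])
  then show "radical_of D I \<subseteq> Q \<Longrightarrow> I \<subseteq> Q" by blast
next
  show "I \<subseteq> Q \<Longrightarrow> radical_of D I \<subseteq> Q"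
    using prime_ideal_of_power_mem_imp_mem[OF assms(1,2)] unfolding radical_of_def by blast
qed

lemma generator_mem_ideal_gen:
  assumes "subring_of D" "finite F" "f \<in> F"
  shows "f \<in> ideal_gen D F"
proof -
  let ?r = "\<lambda>g. if g = f then 1 else 0"
  have "(\<Sum>g\<in>F. ?r g * g) = (\<Sum>g\<in>F. if g = f then g else 0)"
    by (rule sum.cong) auto
  also have "\<dots> = f" using assms(2,3) by simp
  finally have "f = (\<Sum>g\<in>F. ?r g * g)" ..
  moreover have "\<forall>g\<in>F. ?r g \<in> D"
    using assms(1) unfolding subring_of_def by simp
  ultimately show ?thesis unfolding ideal_gen_def by (intro CollectI exI[of _ ?r] conjI)
qed

lemma ideal_gen_subset_iff:
  assumes "subring_of D" "ideal_of D I" "finite F"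
  shows "ideal_gen D F \<subseteq> I \<longleftrightarrow> F \<subseteq> I"
proof
  show "ideal_gen D F \<subseteq> I \<Longrightarrow> F \<subseteq> I"
    using generator_mem_ideal_gen[OF assms(1,3)] by blast
next
  assume "F \<subseteq> I"
  show "ideal_gen D F \<subseteq> I"
  proof
    fix y assume "y \<in> ideal_gen D F"
    then obtain r where "y = (\<Sum>f\<in>F. r f * f)" "\<forall>f\<in>F. r f \<in> D"
      unfolding ideal_gen_def by blast
    moreover have "r f * f \<in> I" if "r f \<in> D" "f \<in> F" for f
      using assms(2) \<open>F \<subseteq> I\<close> that unfolding ideal_of_def by blast
    ultimately show "y \<in> I" using ideal_of_sum_mem[OF assms(2,3)] by simp
  qed
qed

lemma subset_prime_iff_radical_generators_subset:
  assumes "subring_of D" "prime_ideal_of D Q" "finite F" "F \<subseteq> D" "I \<subseteq> D"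
    and "radical_of D I = radical_of D (ideal_gen D F)"
  shows "I \<subseteq> Q \<longleftrightarrow> F \<subseteq> Q"
proof -
  have Q: "ideal_of D Q" using assms(2) by (simp add: prime_ideal_of_def)
  have "ideal_gen D F \<subseteq> D"
    using ideal_gen_subset_iff[OF assms(1) subring_of_imp_ideal_of_self[OF assms(1)] assms(3)]
      assms(4) by blast
  have "I \<subseteq> Q \<longleftrightarrow> radical_of D I \<subseteq> Q"
    using radical_of_subset_prime_iff[OF assms(1,2,5)] by simp
  also have "\<dots> \<longleftrightarrow> ideal_gen D F \<subseteq> Q"
    using radical_of_subset_prime_iff[OF assms(1,2) \<open>ideal_gen D F \<subseteq> D\<close>] assms(6) by simp
  also have "\<dots> \<longleftrightarrow> F \<subseteq> Q"
    using ideal_gen_subset_iff[OF assms(1) Q assms(3)] .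
  finally show ?thesis .
qed

lemma prime_ideal_of_Union_chain:
  assumes "subring_of D" "\<C> \<noteq> {}" "\<forall>Q\<in>\<C>. prime_ideal_of D Q"
    and "\<forall>X\<in>\<C>. \<forall>Y\<in>\<C>. X \<subseteq> Y \<or> Y \<subseteq> X"
  shows "prime_ideal_of D (\<Union>\<C>)"
proof -
  have ideals: "ideal_of D Q" if "Q \<in> \<C>" for Q
    using assms(3) that by (simp add: prime_ideal_of_def)
  have "a + b \<in> \<Union>\<C>" if "a \<in> \<Union>\<C>" "b \<in> \<Union>\<C>" for a b
  proof -
    obtain X Y where "X \<in> \<C>" "Y \<in> \<C>" "a \<in> X" "b \<in> Y"
      using \<open>a \<in> \<Union>\<C>\<close> \<open>b \<in> \<Union>\<C>\<close> by blast
    then obtain Z where "Z \<in> \<C>" "a \<in> Z" "b \<in> Z" using assms(4) by blast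
    then show ?thesis using ideals unfolding ideal_of_def by blast
  qed
  moreover have "r * a \<in> \<Union>\<C>" if "r \<in> D" "a \<in> \<Union>\<C>" for r a
    using that ideals unfolding ideal_of_def by blast
  moreover have "\<Union>\<C> \<subseteq> D" "0 \<in> \<Union>\<C>"
    using assms(2) ideals unfolding ideal_of_def by blast+
  ultimately have "ideal_of D (\<Union>\<C>)" unfolding ideal_of_def by blast
  moreover have "1 \<in> D" "1 \<notin> \<Union>\<C>"
    using assms(1,3) prime_ideal_of_one_notin by (auto simp: subring_of_def)
  moreover have "a \<in> \<Union>\<C> \<or> b \<in> \<Union>\<C>"
    if "a \<in> D" "b \<in> D" "a * b \<in> \<Union>\<C>" for a b
    using that assms(3) unfolding prime_ideal_of_def by blast
  ultimately show ?thesis unfolding prime_ideal_of_def by blast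
qed

lemma mem_localization_iff_conductor:
  assumes "0 \<in> Q"
  shows "x \<in> localization D Q \<longleftrightarrow> \<not> conductor D x \<subseteq> Q"
proof
  assume "x \<in> localization D Q"
  then obtain a s where "x = a / s" "a \<in> D" "s \<in> D" "s \<notin> Q"
    unfolding localization_def by blast
  moreover from this have "s \<noteq> 0" using assms by blast
  ultimately have "s \<in> conductor D x" by (simp add: conductor_def)
  then show "\<not> conductor D x \<subseteq> Q" using \<open>s \<notin> Q\<close> by blast
next
  assume "\<not> conductor D x \<subseteq> Q"
  then obtain d where "d \<in> D" "d * x \<in> D" "d \<notin> Q" by (auto simp: conductor_def)
  moreover have "x = (d * x) / d" using assms \<open>d \<notin> Q\<close> by auto
  ultimately show "x \<in> localization D Q" unfolding localization_def by blast
qed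

lemma prime_ideal_of_zero_mem: "prime_ideal_of D Q \<Longrightarrow> 0 \<in> Q"
  by (simp add: prime_ideal_of_def ideal_of_def)

lemma conductor_subset_Union_chain:
  assumes "subring_of D" "rad_colon_coherent D"
    and "\<C> \<noteq> {}" "\<forall>Q\<in>\<C>. prime_ideal_of D Q" "\<forall>X\<in>\<C>. \<forall>Y\<in>\<C>. X \<subseteq> Y \<or> Y \<subseteq> X"
    and "conductor D x \<subseteq> \<Union>\<C>"
  obtains Q where "Q \<in> \<C>" "conductor D x \<subseteq> Q"
proof -
  obtain F where F: "finite F" "F \<subseteq> D"
    "radical_of D (conductor D x) = radical_of D (ideal_gen D F)"
    using assms(2) unfolding rad_colon_coherent_def by blast
  have "conductor D x \<subseteq> D" by (auto simp: conductor_def)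
  note conductor_subset_prime_iff =
    subset_prime_iff_radical_generators_subset[OF assms(1) _ F(1,2) this F(3)]
  have "prime_ideal_of D (\<Union>\<C>)" using prime_ideal_of_Union_chain[OF assms(1,3-5)] .
  then have "F \<subseteq> \<Union>\<C>" using conductor_subset_prime_iff assms(6) by blast
  then obtain Q where "Q \<in> \<C>" "F \<subseteq> Q"
    using finite_subset_Union_chain[OF F(1) _ assms(3), of UNIV] assms(5)
    by (auto simp: subset_chain_def)
  then show ?thesis using that conductor_subset_prime_iff assms(4) by blast
qed

theorem proposition6p9:
  fixes D :: "'k::field set" and A :: "'i set" and P :: "'i \<Rightarrow> 'k set"
  assumes "subring_of D"
    and "has_quotient_field_UNIV D"
    and "rad_colon_coherent D"
    and "A \<noteq> {}"
    and "\<forall>\<alpha>\<in>A. prime_ideal_of D (P \<alpha>)"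
    and "\<forall>\<alpha>\<in>A. \<forall>\<beta>\<in>A. P \<alpha> \<subseteq> P \<beta> \<or> P \<beta> \<subseteq> P \<alpha>"
  shows "(\<Inter>\<alpha>\<in>A. localization D (P \<alpha>)) = localization D (\<Union>\<alpha>\<in>A. P \<alpha>)"
proof -
  let ?Q = "\<Union>\<alpha>\<in>A. P \<alpha>"
  have chain: "P ` A \<noteq> {}" "\<forall>Q\<in>P ` A. prime_ideal_of D Q"
    "\<forall>X\<in>P ` A. \<forall>Y\<in>P ` A. X \<subseteq> Y \<or> Y \<subseteq> X"
    using assms(4-6) by auto
  have "0 \<in> ?Q" "\<And>\<alpha>. \<alpha> \<in> A \<Longrightarrow> 0 \<in> P \<alpha>"
    using assms(4,5) prime_ideal_of_zero_mem by blast+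
  note mem_localization = this[THEN mem_localization_iff_conductor]
  have "x \<in> (\<Inter>\<alpha>\<in>A. localization D (P \<alpha>)) \<longleftrightarrow> x \<in> localization D ?Q" for x
  proof -
    have "x \<in> (\<Inter>\<alpha>\<in>A. localization D (P \<alpha>)) \<longleftrightarrow> (\<forall>\<alpha>\<in>A. \<not> conductor D x \<subseteq> P \<alpha>)"
      by (simp add: mem_localization(2))
    also have "\<dots> \<longleftrightarrow> \<not> conductor D x \<subseteq> ?Q"
      using conductor_subset_Union_chain[OF assms(1,3) chain] by blast
    also have "\<dots> \<longleftrightarrow> x \<in> localization D ?Q"
      by (simp add: mem_localization(1))
    finally show ?thesis .
  qed
  then show ?thesis by blast
qed

end
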